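(* Consider the following adversarial linear contextual bandit game with off-policy feedback. There is a context space $\mathcal{X}$, a finite action set $\mathcal{A}$ of size $K$, and a known feature map $\varphi:\mathcal{X}\times\mathcal{A}\to\mathbb{R}^d$. In each round $t=1,\dots,n$: the adversary chooses $\theta_t\in\mathbb{R}^d$ depending only on the past (not on $X_t$ or $A_t$), such that the rewards $r_t(x,a)=\langle\theta_t,\varphi(x,a)\rangle$ lie in $[0,1]$ for all $(x,a)$; a context $X_t$ is drawn i.i.d. from a fixed distribution on $\mathcal{X}$ and revealed to the learner; the learner picks $A_t\in\mathcal{A}$; an action $A^B_t\sim\pi_B(\cdot\mid X_t)$ is drawn from a fixed behavior policy $\pi_B:\mathcal{X}\to\Delta_{\mathcal{A}}$; the learner observes $R^B_t=r_t(X_t,A^B_t)$ and $\varphi(X_t,A^B_t)$ (but not its own reward). For a policy $\pi:\mathcal{X}\to\Delta_{\mathcal{A}}$ let $\overline V(\pi)=\mathbb{E}\big[\sum_a\pi(a\mid X)\varphi(X,a)\varphi(X,a)^\top\big]$ with $X$ drawn from the context distribution. Assume $\overline V(\pi_B)$ is known to the learner and invertible. The learner runs LinProd with learning rate $\eta>0$: it sets $\hat\theta_t=\overline V(\pi_B)^{-1}\varphi(X_t,A^B_t)R^B_t$, and in round $t$ draws $A_t$ from $$\pi_t(a\mid X_t)=\frac{w_t(X_t,a)}{\sum_{a'}w_t(X_t,a')},\qquad w_t(x,a)=\prod_{k=1}^{t-1}\big(1+\eta\langle\hat\theta_k,\varphi(x,a)\rangle\big).$$ Suppose $\lambda_{\min}(\overline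 V(\pi_B))\ge 2\eta\sup_{x,a}\|\varphi(x,a)\|_2^2$. Then for any comparator policy $\pi^*:\mathcal{X}\to\Delta_{\mathcal{A}}$, the regret $\mathcal{R}(\pi^* )=\sum_{t=1}^n\sum_a(\pi^*(a\mid X_t)-\pi_t(a\mid X_t))r_t(X_t,a)$ satisfies $$\mathbb{E}[\mathcal{R}(\pi^* )]\le\frac{\log K}{\eta}+\eta\, n\, C_\varphi(\pi^*;\pi_B),\qquad C_\varphi(\pi^*;\pi_B)=\mathrm{Tr}\big[\overline V(\pi_B)^{-1}\overline V(\pi^* )\big].$$ In particular, if $n$ is large enough that the condition on $\eta$ holds, then setting $\eta=\sqrt{\log K/n}$ gives $\mathbb{E}[\mathcal{R}(\pi^* )]\le\sqrt{n\log K}\,(1+C_\varphi(\pi^*;\pi_B))$, and setting $\eta=\sqrt{\log K/(C_\varphi(\pi^*;\pi_B)n)}$ gives $\mathbb{E}[\mathcal{R}(\pi^* )]\le 2\sqrt{C_\varphi(\pi^*;\pi_B)\,n\log K}$.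
   Context: $\Delta_{\mathcal{A}}$ is the set of probability distributions on $\mathcal{A}$; $\lambda_{\min}$ denotes the smallest eigenvalue and $\mathrm{Tr}$ the trace. $\pi_t(\cdot\mid x)$ is the learner's policy in round $t$, determined by past observations. The expectation is over all randomness of contexts, actions and adversary. *)

theory Defs
  imports "HOL-Probability.Probability"
begin

definition outer :: "real^'d \<Rightarrow> real^'d^'d" where
  "outer v = (\<chi> i j. v$i * v$j)"

definition is_policy :: "('x \<Rightarrow> 'a::finite \<Rightarrow> real) \<Rightarrow> bool" where
  "is_policy \<pi> \<longleftrightarrow> (\<forall>x a. 0 \<le> \<pi> x a) \<and> (\<forall>x. (\<Sum>a\<in>UNIV. \<pi> x a) = 1)"

definition Vbar :: "'x measure \<Rightarrow> ('x \<Rightarrow> 'a::finite \<Rightarrow> real^'d) \<Rightarrow> ('x \<Rightarrow> 'a \<Rightarrow> real) \<Rightarrow> real^'d^'d" where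
  "Vbar D \<phi> \<pi> = (\<integral>x. (\<Sum>a\<in>UNIV. \<pi> x a *\<^sub>R outer (\<phi> x a)) \<partial>D)"

text \<open>Smallest eigenvalue (for the symmetric matrices considered, all eigenvalues are real).\<close>
definition lambda_min :: "real^'d^'d \<Rightarrow> real" where
  "lambda_min A = Inf {l. \<exists>v. v \<noteq> 0 \<and> A *v v = l *\<^sub>R v}"

definition C_phi :: "'x measure \<Rightarrow> ('x \<Rightarrow> 'a::finite \<Rightarrow> real^'d) \<Rightarrow> ('x \<Rightarrow> 'a \<Rightarrow> real) \<Rightarrow> ('x \<Rightarrow> 'a \<Rightarrow> real) \<Rightarrow> real" where
  "C_phi D \<phi> \<pi>s \<pi>B = trace (matrix_inv (Vbar D \<phi> \<pi>B) ** Vbar D \<phi> \<pi>s)"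

text \<open>A history is a function h : nat => context x learner action x behaviour action;
  entry h s = (X_s, A_s, A^B_s) for the rounds s already played (rounds indexed from 0).
  The (deterministic part of the) adversary is adv : nat => history => R^d, where adv t
  is applied to the history of rounds < t only.\<close>

definition theta_hat :: "'x measure \<Rightarrow> ('x \<Rightarrow> 'a::finite \<Rightarrow> real^'d) \<Rightarrow> ('x \<Rightarrow> 'a \<Rightarrow> real)
    \<Rightarrow> (nat \<Rightarrow> (nat \<Rightarrow> 'x \<times> 'a \<times> 'a) \<Rightarrow> real^'d) \<Rightarrow> (nat \<Rightarrow> 'x \<times> 'a \<times> 'a) \<Rightarrow> nat \<Rightarrow> real^'d" where
  "theta_hat D \<phi> \<pi>B adv h k =
     (case h k of (x, a, b) \<Rightarrow>
        matrix_inv (Vbar D \<phi> \<pi>B) *v ((adv k (restrict h {..<k}) \<bullet> \<phi> x b) *\<^sub>R \<phi> x b))"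

definition linprod_weight :: "'x measure \<Rightarrow> ('x \<Rightarrow> 'a::finite \<Rightarrow> real^'d) \<Rightarrow> ('x \<Rightarrow> 'a \<Rightarrow> real)
    \<Rightarrow> (nat \<Rightarrow> (nat \<Rightarrow> 'x \<times> 'a \<times> 'a) \<Rightarrow> real^'d) \<Rightarrow> real \<Rightarrow> (nat \<Rightarrow> 'x \<times> 'a \<times> 'a) \<Rightarrow> nat \<Rightarrow> 'x \<Rightarrow> 'a \<Rightarrow> real" where
  "linprod_weight D \<phi> \<pi>B adv \<eta> h t x a =
     (\<Prod>k<t. 1 + \<eta> * (theta_hat D \<phi> \<pi>B adv h k \<bullet> \<phi> x a))"

definition linprod_policy :: "'x measure \<Rightarrow> ('x \<Rightarrow> 'a::finite \<Rightarrow> real^'d) \<Rightarrow> ('x \<Rightarrow> 'a \<Rightarrow> real)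
    \<Rightarrow> (nat \<Rightarrow> (nat \<Rightarrow> 'x \<times> 'a \<times> 'a) \<Rightarrow> real^'d) \<Rightarrow> real \<Rightarrow> (nat \<Rightarrow> 'x \<times> 'a \<times> 'a) \<Rightarrow> nat \<Rightarrow> 'x \<Rightarrow> 'a \<Rightarrow> real" where
  "linprod_policy D \<phi> \<pi>B adv \<eta> h t x a =
     linprod_weight D \<phi> \<pi>B adv \<eta> h t x a / (\<Sum>a'\<in>UNIV. linprod_weight D \<phi> \<pi>B adv \<eta> h t x a')"

text \<open>Conditional expected regret of the remaining m rounds, given that rounds < t have been
  played with history h.  In round t: theta_t = adv t h; X_t ~ D; A_t ~ pi_t(.|X_t);
  A^B_t ~ pi_B(.|X_t) (independently given X_t); instantaneous regret
  sum_a (pi*(a|X_t) - pi_t(a|X_t)) <theta_t, phi(X_t,a)>.\<close>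
fun regret_to_go :: "'x measure \<Rightarrow> ('x \<Rightarrow> 'a::finite \<Rightarrow> real^'d) \<Rightarrow> ('x \<Rightarrow> 'a \<Rightarrow> real) \<Rightarrow> ('x \<Rightarrow> 'a \<Rightarrow> real)
    \<Rightarrow> (nat \<Rightarrow> (nat \<Rightarrow> 'x \<times> 'a \<times> 'a) \<Rightarrow> real^'d) \<Rightarrow> real \<Rightarrow> nat \<Rightarrow> nat \<Rightarrow> (nat \<Rightarrow> 'x \<times> 'a \<times> 'a) \<Rightarrow> real" where
  "regret_to_go D \<phi> \<pi>B \<pi>s adv \<eta> 0 t h = 0"
| "regret_to_go D \<phi> \<pi>B \<pi>s adv \<eta> (Suc m) t h =
     (\<integral>x. (\<Sum>a\<in>UNIV. \<Sum>b\<in>UNIV.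
            linprod_policy D \<phi> \<pi>B adv \<eta> h t x a * \<pi>B x b *
            ((\<Sum>a'\<in>UNIV. (\<pi>s x a' - linprod_policy D \<phi> \<pi>B adv \<eta> h t x a') * (adv t h \<bullet> \<phi> x a'))
             + regret_to_go D \<phi> \<pi>B \<pi>s adv \<eta> m (Suc t) (h(t := (x, a, b))))) \<partial>D)"

text \<open>Expected regret E[R(pi*)] over n rounds; the adversary may be randomised through a
  seed u ~ U drawn at the start (independent of everything else).\<close>
definition expected_regret :: "'u measure \<Rightarrow> 'x measure \<Rightarrow> ('x \<Rightarrow> 'a::finite \<Rightarrow> real^'d) \<Rightarrow> ('x \<Rightarrow> 'a \<Rightarrow> real)
    \<Rightarrow> ('x \<Rightarrow> 'a \<Rightarrow> real) \<Rightarrow> ('u \<Rightarrow> nat \<Rightarrow> (nat \<Rightarrow> 'x \<times> 'a \<times> 'a) \<Rightarrow> real^'d) \<Rightarrow> real \<Rightarrow> nat \<Rightarrow> real" where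
  "expected_regret U D \<phi> \<pi>B \<pi>s adv \<eta> n =
     (\<integral>u. regret_to_go D \<phi> \<pi>B \<pi>s (adv u) \<eta> n 0 (\<lambda>_. undefined) \<partial>U)"

definition eta_condition :: "'x measure \<Rightarrow> ('x \<Rightarrow> 'a::finite \<Rightarrow> real^'d) \<Rightarrow> ('x \<Rightarrow> 'a \<Rightarrow> real) \<Rightarrow> real \<Rightarrow> bool" where
  "eta_condition D \<phi> \<pi>B \<eta> \<longleftrightarrow>
     lambda_min (Vbar D \<phi> \<pi>B) \<ge> 2 * \<eta> * (SUP p\<in>UNIV. (norm (\<phi> (fst p) (snd p)))\<^sup>2)"

end

theory Submission
  imports Defs
begin

text \<open>LinProd is the Prod algorithm run on importance-weighted estimates of the reward vectors.
  Its potential, the log of the total weight at a context minus the comparator-weighted log weights,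
  is ln K initially and never negative.  In one round it drops by at least \<eta> times the
  estimated instantaneous regret minus \<eta>^2 times the comparator-weighted squared estimates,
  provided every factor 1 + \<eta> \<langle>\<theta>hat, \<phi>\<rangle> lies in [1/2, 3/2], which the step-size condition
  guarantees.  Averaging over the fresh context and the behaviour action, the estimate is unbiased
  and its second moment along \<phi>(x,a) is at most \<phi>(x,a)^T Vbar(\<pi>B)^-1 \<phi>(x,a), whose average
  under \<pi>* is C_\<phi>(\<pi>*; \<pi>B).  Summing over the rounds, by induction on the number of rounds
  left, gives \<eta> E[regret] \<le> ln K + \<eta>^2 n C_\<phi>.\<close>

lemma symmetric_matrix_iff_inner:
  fixes A :: "real^'n^'n"
  shows "transpose A = A \<longleftrightarrow> (\<forall>v w. v \<bullet> (A *v w) = w \<bullet> (A *v v))"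
proof
  assume "transpose A = A"
  then show "\<forall>v w. v \<bullet> (A *v w) = w \<bullet> (A *v v)"
    by (metis dot_lmul_matrix inner_commute transpose_matrix_vector)
next
  assume sym: "\<forall>v w. v \<bullet> (A *v w) = w \<bullet> (A *v v)"
  have "transpose A *v y = A *v y" for y
    by (metis sym vector_eq_ldot dot_lmul_matrix inner_commute transpose_matrix_vector)
  then show "transpose A = A" by (simp add: matrix_eq)
qed

lemma matrix_inv_right: "invertible A \<Longrightarrow> A ** matrix_inv A = mat 1"
  unfolding invertible_def matrix_inv_def by (metis (mono_tags, lifting) someI_ex)

lemma transpose_matrix_inv_symmetric:
  fixes A :: "real^'n^'n"
  assumes sym: "transpose A = A" and inv: "invertible A"
  shows "transpose (matrix_inv A) = matrix_inv A"
proof -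
  have "transpose (matrix_inv A) = transpose (matrix_inv A) ** (A ** matrix_inv A)"
    by (simp add: matrix_inv_right[OF inv])
  also have "\<dots> = transpose (A ** matrix_inv A) ** matrix_inv A"
    by (simp add: matrix_mul_assoc matrix_transpose_mul sym)
  finally show ?thesis by (simp add: matrix_inv_right[OF inv])
qed

lemma linear_coeff_zero_if_quadratic_nonneg:
  fixes a c :: real
  assumes nonneg: "\<And>t. 0 \<le> 2 * t * a + t\<^sup>2 * c"
  shows "a = 0"
proof (rule ccontr)
  assume "a \<noteq> 0"
  define s where "s = \<bar>c\<bar> + 1"
  define t where "t = - a / s"
  have s: "0 < s" "c \<le> s" by (auto simp: s_def)
  have "2 * t * a + t\<^sup>2 * c \<le> 2 * t * a + t\<^sup>2 * s"
    using s by (intro add_left_mono mult_left_mono) auto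
  also have "\<dots> = - a\<^sup>2 / s"
    using s by (simp add: t_def power2_eq_square field_simps)
  also have "\<dots> < 0"
    using \<open>a \<noteq> 0\<close> s by simp
  finally show False using nonneg[of t] by linarith
qed

text \<open>On the line v + t r with r = A v - \<mu> v, the nonnegative function y \<bullet> A y - \<mu> y \<bullet> y is a
  quadratic in t that vanishes at t = 0 and has linear coefficient 2 r \<bullet> r; hence r = 0.\<close>
lemma rayleigh_minimizer_eigenvector:
  fixes A :: "real^'n^'n"
  assumes sym: "transpose A = A"
    and min: "\<And>y. \<mu> * (y \<bullet> y) \<le> y \<bullet> (A *v y)"
    and attained: "v \<bullet> (A *v v) = \<mu> * (v \<bullet> v)"
  shows "A *v v = \<mu> *\<^sub>R v"
proof -
  define r where "r = A *v v - \<mu> *\<^sub>R v"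
  have swap: "v \<bullet> (A *v r) = r \<bullet> (A *v v)"
    using sym unfolding symmetric_matrix_iff_inner by blast
  have "0 \<le> 2 * t * (r \<bullet> r) + t\<^sup>2 * (r \<bullet> (A *v r) - \<mu> * (r \<bullet> r))" for t
  proof -
    let ?y = "v + t *\<^sub>R r"
    have "0 \<le> ?y \<bullet> (A *v ?y) - \<mu> * (?y \<bullet> ?y)" using min[of ?y] by simp
    also have "\<dots> = 2 * t * (r \<bullet> r) + t\<^sup>2 * (r \<bullet> (A *v r) - \<mu> * (r \<bullet> r))"
      using attained swap
      by (simp add: r_def matrix_vector_right_distrib matrix_vector_mult_scaleR inner_add_left
          inner_add_right inner_diff_left inner_commute power2_eq_square algebra_simps)
    finally show ?thesis .
  qed
  then have "r \<bullet> r = 0" by (rule linear_coeff_zero_if_quadratic_nonneg)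
  then show ?thesis by (simp add: r_def)
qed

lemma symmetric_matrix_min_eigenvector:
  fixes A :: "real^'n^'n"
  assumes sym: "transpose A = A"
  obtains \<mu> v where "v \<noteq> 0" "A *v v = \<mu> *\<^sub>R v" "\<And>y. \<mu> * (y \<bullet> y) \<le> y \<bullet> (A *v y)"
proof -
  define f where "f v = v \<bullet> (A *v v)" for v
  have "continuous_on (sphere 0 1) f"
    unfolding f_def by (intro continuous_intros linear_continuous_on matrix_vector_mul_bounded_linear)
  moreover have "sphere (0::real^'n) 1 \<noteq> {}" by simp
  ultimately obtain v where v: "v \<in> sphere 0 1" and v_min: "\<And>y. y \<in> sphere 0 1 \<Longrightarrow> f v \<le> f y"
    using continuous_attains_inf[OF compact_sphere] by blast
  have vv: "v \<bullet> v = 1" using v by (simp add: dot_square_norm)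
  have rayleigh: "f v * (y \<bullet> y) \<le> y \<bullet> (A *v y)" for y
  proof (cases "y = 0")
    case False
    have "f v \<le> f ((1 / norm y) *\<^sub>R y)" using False by (intro v_min) simp
    also have "\<dots> = (y \<bullet> (A *v y)) / (y \<bullet> y)"
      by (simp add: f_def matrix_vector_mult_scaleR dot_square_norm power2_eq_square)
    finally show ?thesis using False by (simp add: field_simps)
  qed simp
  have "A *v v = f v *\<^sub>R v"
    using sym rayleigh by (rule rayleigh_minimizer_eigenvector) (simp add: f_def vv)
  with v rayleigh show thesis by (intro that) auto
qed

lemma lambda_min_eigenvector:
  fixes A :: "real^'n^'n"
  assumes sym: "transpose A = A"
  obtains v where "v \<noteq> 0" "A *v v = lambda_min A *\<^sub>R v"
    and "\<And>y. lambda_min A * (y \<bullet> y) \<le> y \<bullet> (A *v y)"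
proof -
  obtain v \<mu> where v: "v \<noteq> 0" "A *v v = \<mu> *\<^sub>R v" and min: "\<And>y. \<mu> * (y \<bullet> y) \<le> y \<bullet> (A *v y)"
    using symmetric_matrix_min_eigenvector[OF sym] by blast
  have "lambda_min A = \<mu>"
    unfolding lambda_min_def
  proof (rule cInf_eq_minimum)
    fix l assume "l \<in> {l. \<exists>w. w \<noteq> 0 \<and> A *v w = l *\<^sub>R w}"
    then obtain w where "w \<noteq> 0" "A *v w = l *\<^sub>R w" by blast
    then show "\<mu> \<le> l" using min[of w] by simp
  qed (use v in blast)
  with v min show thesis by (intro that) auto
qed

lemma lambda_min_le_rayleigh:
  fixes A :: "real^'n^'n"
  shows "transpose A = A \<Longrightarrow> lambda_min A * (y \<bullet> y) \<le> y \<bullet> (A *v y)"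
  by (metis lambda_min_eigenvector)

lemma lambda_min_pos:
  fixes A :: "real^'n^'n"
  assumes sym: "transpose A = A" and psd: "\<And>v. 0 \<le> v \<bullet> (A *v v)" and inv: "invertible A"
  shows "0 < lambda_min A"
proof -
  obtain v where v: "v \<noteq> 0" "A *v v = lambda_min A *\<^sub>R v"
    using lambda_min_eigenvector[OF sym] by metis
  have "0 \<le> lambda_min A * (v \<bullet> v)" using psd[of v] v by simp
  moreover have "0 < v \<bullet> v" using v by simp
  ultimately have "0 \<le> lambda_min A" by (simp add: zero_le_mult_iff)
  moreover have "lambda_min A \<noteq> 0"
    using v inj_matrix_vector_mult[OF inv] by (metis injD matrix_vector_mult_0_right scaleR_zero_left)
  ultimately show ?thesis by simp
qed

lemma norm_matrix_inv_mult_le: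
  fixes A :: "real^'n^'n"
  assumes sym: "transpose A = A" and psd: "\<And>v. 0 \<le> v \<bullet> (A *v v)" and inv: "invertible A"
  shows "norm (matrix_inv A *v z) \<le> norm z / lambda_min A"
proof -
  define q where "q = matrix_inv A *v z"
  have "A *v q = z" by (simp add: q_def matrix_vector_mul_assoc matrix_inv_right[OF inv])
  then have "lambda_min A * (norm q)\<^sup>2 \<le> q \<bullet> z"
    using lambda_min_le_rayleigh[OF sym, of q] by (simp add: dot_square_norm)
  also have "\<dots> \<le> norm q * norm z" by (rule norm_cauchy_schwarz)
  finally have "lambda_min A * norm q \<le> norm z"
    by (cases "q = 0") (simp_all add: power2_eq_square)
  then show ?thesis
    using lambda_min_pos[OF sym psd inv] by (simp add: q_def field_simps)
qed

lemma inner_matrix_inv_nonneg: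
  fixes A :: "real^'n^'n"
  assumes sym: "transpose A = A" and psd: "\<And>v. 0 \<le> v \<bullet> (A *v v)" and inv: "invertible A"
  shows "0 \<le> y \<bullet> (matrix_inv A *v y)"
proof -
  define z where "z = matrix_inv A *v y"
  have "A *v z = y" by (simp add: z_def matrix_vector_mul_assoc matrix_inv_right[OF inv])
  then show ?thesis using psd[of z] by (simp add: z_def inner_commute)
qed

lemma is_policy_nonneg: "is_policy \<pi> \<Longrightarrow> 0 \<le> \<pi> x a"
  and is_policy_sum: "is_policy \<pi> \<Longrightarrow> (\<Sum>a\<in>UNIV. \<pi> x a) = 1"
  by (simp_all add: is_policy_def)

lemma abs_policy_sum_le:
  assumes pol: "is_policy \<pi>" and bound: "\<And>a. \<bar>f a\<bar> \<le> K"
  shows "\<bar>\<Sum>a\<in>UNIV. \<pi> x a * f a\<bar> \<le> K"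
proof -
  have "\<bar>\<Sum>a\<in>UNIV. \<pi> x a * f a\<bar> \<le> (\<Sum>a\<in>UNIV. \<pi> x a * K)"
    using is_policy_nonneg[OF pol]
    by (intro order_trans[OF sum_abs sum_mono]) (simp add: abs_mult mult_left_mono bound)
  then show ?thesis by (simp add: sum_distrib_right[symmetric] is_policy_sum[OF pol])
qed

lemma abs_policy_diff_sum_le:
  assumes "is_policy \<pi>" "is_policy \<pi>'" "\<And>a. \<bar>f a\<bar> \<le> K"
  shows "\<bar>\<Sum>a\<in>UNIV. (\<pi> x a - \<pi>' x a) * f a\<bar> \<le> 2 * K"
proof -
  have "(\<Sum>a\<in>UNIV. (\<pi> x a - \<pi>' x a) * f a) = (\<Sum>a\<in>UNIV. \<pi> x a * f a) - (\<Sum>a\<in>UNIV. \<pi>' x a * f a)"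
    by (simp add: left_diff_distrib sum_subtractf)
  moreover have "\<bar>\<Sum>a\<in>UNIV. \<pi> x a * f a\<bar> \<le> K" "\<bar>\<Sum>a\<in>UNIV. \<pi>' x a * f a\<bar> \<le> K"
    by (rule abs_policy_sum_le, fact, fact)+
  ultimately show ?thesis
    using abs_triangle_ineq4[of "\<Sum>a\<in>UNIV. \<pi> x a * f a" "\<Sum>a\<in>UNIV. \<pi>' x a * f a"] by linarith
qed

lemma (in finite_measure) integrable_real_bounded:
  fixes f :: "'a \<Rightarrow> real"
  shows "f \<in> borel_measurable M \<Longrightarrow> (\<And>x. \<bar>f x\<bar> \<le> K) \<Longrightarrow> integrable M f"
  by (intro integrable_const_bound[where B=K] AE_I2) auto

lemma continuous_on_outer: "continuous_on S (outer :: real^'d \<Rightarrow> _)"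
  unfolding outer_def by (intro continuous_intros)

lemma norm_outer: "norm (outer (v::real^'d)) = (norm v)\<^sup>2"
proof -
  have row: "outer v $ i = v$i *\<^sub>R v" for i by (simp add: outer_def vec_eq_iff)
  have "norm (outer v) = L2_set (\<lambda>i. \<bar>v$i\<bar> * norm v) UNIV"
    unfolding norm_vec_def[of "outer v"] by (simp add: row)
  also have "\<dots> = L2_set (\<lambda>i. \<bar>v$i\<bar>) UNIV * norm v"
    by (rule L2_set_left_distrib[symmetric]) simp
  finally show ?thesis by (simp add: norm_vec_def power2_eq_square)
qed

lemma inner_outer_mult: "v \<bullet> (outer u *v w) = (v \<bullet> u) * (u \<bullet> w)" for u v w :: "real^'d"
  by (simp add: outer_def matrix_vector_mult_def inner_vec_def sum_product sum_distrib_left mult_ac)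
    (subst (2) sum.swap, simp add: mult_ac)

lemma trace_mult_outer: "trace (A ** outer u) = u \<bullet> (A *v u)" for u :: "real^'d"
  by (simp add: outer_def trace_def matrix_matrix_mult_def matrix_vector_mult_def inner_vec_def
      sum_distrib_left mult_ac)

lemma bounded_linear_bilinear_form: "bounded_linear (\<lambda>M::real^'d^'d. v \<bullet> (M *v w))"
proof -
  have "linear (\<lambda>M::real^'d^'d. v \<bullet> (M *v w))"
    by (rule linearI) (simp_all add: matrix_vector_mult_add_rdistrib inner_add_right
        scaleR_matrix_vector_assoc[symmetric])
  then show ?thesis using linear_conv_bounded_linear by blast
qed

lemma bounded_linear_trace_mult: "bounded_linear (\<lambda>M::real^'d^'d. trace (A ** M))"
proof -
  have "linear (\<lambda>M::real^'d^'d. trace (A ** M))"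
    by (rule linearI) (simp_all add: matrix_add_ldistrib trace_add trace_def matrix_matrix_mult_def
        sum_distrib_left sum.distrib algebra_simps)
  then show ?thesis using linear_conv_bounded_linear by blast
qed

lemma bounded_linear_sum_scaleR:
  fixes T :: "'b::real_normed_vector \<Rightarrow> real"
  shows "bounded_linear T \<Longrightarrow> T (\<Sum>a\<in>A. c a *\<^sub>R M a) = (\<Sum>a\<in>A. c a * T (M a))"
  by (simp add: linear_sum[OF bounded_linear.linear] linear_scale[OF bounded_linear.linear])

locale linear_features = prob_space D for D :: "'x measure" +
  fixes \<phi> :: "'x \<Rightarrow> 'a::finite \<Rightarrow> real^'d"
  assumes phi_meas[measurable]: "\<And>a. (\<lambda>x. \<phi> x a) \<in> borel_measurable D"
    and phi_bdd: "\<exists>B. \<forall>x a. norm (\<phi> x a) \<le> B"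
begin

lemma phi_bound: obtains B where "0 \<le> B" "\<And>x a. norm (\<phi> x a) \<le> B"
  using phi_bdd by (meson norm_ge_zero order_trans)

context
  fixes \<pi> :: "'x \<Rightarrow> 'a \<Rightarrow> real"
  assumes pol: "is_policy \<pi>" and pol_meas[measurable]: "\<And>a. (\<lambda>x. \<pi> x a) \<in> borel_measurable D"
begin

lemma integrable_Vbar_integrand: "integrable D (\<lambda>x. \<Sum>a\<in>UNIV. \<pi> x a *\<^sub>R outer (\<phi> x a))"
proof -
  obtain B where B: "\<And>x a. norm (\<phi> x a) \<le> B" using phi_bound by blast
  have "(\<lambda>x. \<Sum>a\<in>UNIV. \<pi> x a *\<^sub>R outer (\<phi> x a)) \<in> borel_measurable D"
    by (intro borel_measurable_sum borel_measurable_scaleR pol_meas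
        borel_measurable_continuous_on[OF continuous_on_outer] phi_meas)
  moreover have "norm (\<Sum>a\<in>UNIV. \<pi> x a *\<^sub>R outer (\<phi> x a)) \<le> (\<Sum>a\<in>UNIV. \<pi> x a * B\<^sup>2)" for x
    using is_policy_nonneg[OF pol]
    by (intro order_trans[OF norm_sum sum_mono])
      (simp add: norm_outer mult_left_mono power_mono B)
  ultimately show ?thesis
    by (intro integrable_const_bound[where B="B\<^sup>2"] AE_I2)
      (simp_all add: sum_distrib_right[symmetric] is_policy_sum[OF pol])
qed

lemma integrable_bilinear_Vbar_integrand:
  "integrable D (\<lambda>x. \<Sum>a\<in>UNIV. \<pi> x a * ((v \<bullet> \<phi> x a) * (\<phi> x a \<bullet> w)))"
  using integrable_bounded_linear[OF bounded_linear_bilinear_form integrable_Vbar_integrand]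
  by (simp add: bounded_linear_sum_scaleR[OF bounded_linear_bilinear_form] inner_outer_mult)

lemma integrable_trace_Vbar_integrand:
  "integrable D (\<lambda>x. \<Sum>a\<in>UNIV. \<pi> x a * (\<phi> x a \<bullet> (A *v \<phi> x a)))"
  using integrable_bounded_linear[OF bounded_linear_trace_mult integrable_Vbar_integrand]
  by (simp add: bounded_linear_sum_scaleR[OF bounded_linear_trace_mult] trace_mult_outer)

lemma inner_Vbar:
  "v \<bullet> (Vbar D \<phi> \<pi> *v w) = (\<integral>x. (\<Sum>a\<in>UNIV. \<pi> x a * ((v \<bullet> \<phi> x a) * (\<phi> x a \<bullet> w))) \<partial>D)"
  unfolding Vbar_def
  by (simp add: integral_bounded_linear[OF bounded_linear_bilinear_form integrable_Vbar_integrand,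
        symmetric] bounded_linear_sum_scaleR[OF bounded_linear_bilinear_form] inner_outer_mult)

lemma trace_mult_Vbar:
  "trace (A ** Vbar D \<phi> \<pi>) = (\<integral>x. (\<Sum>a\<in>UNIV. \<pi> x a * (\<phi> x a \<bullet> (A *v \<phi> x a))) \<partial>D)"
  unfolding Vbar_def
  by (simp add: integral_bounded_linear[OF bounded_linear_trace_mult integrable_Vbar_integrand,
        symmetric] bounded_linear_sum_scaleR[OF bounded_linear_trace_mult] trace_mult_outer)

lemma Vbar_symmetric: "transpose (Vbar D \<phi> \<pi>) = Vbar D \<phi> \<pi>"
  unfolding symmetric_matrix_iff_inner inner_Vbar by (simp add: inner_commute mult_ac)

lemma Vbar_psd: "0 \<le> v \<bullet> (Vbar D \<phi> \<pi> *v v)"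
  unfolding inner_Vbar
  by (intro integral_nonneg_AE AE_I2 sum_nonneg)
    (simp add: inner_commute[of v] is_policy_nonneg[OF pol])

end

lemma C_phi_nonneg:
  assumes "is_policy \<pi>s" "\<And>a. (\<lambda>x. \<pi>s x a) \<in> borel_measurable D"
    and "is_policy \<pi>B" "\<And>a. (\<lambda>x. \<pi>B x a) \<in> borel_measurable D"
    and "invertible (Vbar D \<phi> \<pi>B)"
  shows "0 \<le> C_phi D \<phi> \<pi>s \<pi>B"
  unfolding C_phi_def trace_mult_Vbar[OF assms(1,2)] using is_policy_nonneg[OF assms(1)]
  by (intro integral_nonneg_AE AE_I2 sum_nonneg mult_nonneg_nonneg
      inner_matrix_inv_nonneg Vbar_symmetric Vbar_psd assms(3-))

end

lemma ln_one_plus_ge_sub_square: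
  fixes z :: real
  assumes "-1/2 \<le> z" "z \<le> 1"
  shows "z - z\<^sup>2 \<le> ln (1 + z)"
proof (cases "0 \<le> z")
  case True
  then show ?thesis using assms ln_one_plus_pos_lower_bound[of z] by simp
next
  case False
  define g where "g x = ln (1 + x) - x + x\<^sup>2" for x :: real
  have "g 0 \<le> g z"
  proof (rule deriv_nonpos_imp_antimono[where a=z and b=0 and g' = "\<lambda>x. x * (1 + 2 * x) / (1 + x)"])
    fix x assume x: "x \<in> {z..0}"
    then have "0 < 1 + x" using assms by auto
    then show "(g has_real_derivative x * (1 + 2 * x) / (1 + x)) (at x)"
      unfolding g_def
      by (auto intro!: derivative_eq_intros simp: power2_eq_square field_simps)
    show "x * (1 + 2 * x) / (1 + x) \<le> 0"
      using x assms \<open>0 < 1 + x\<close> by (intro divide_nonpos_pos mult_nonpos_nonneg) auto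
  qed (use False in simp)
  then show ?thesis by (simp add: g_def)
qed

definition log_potential :: "('a::finite \<Rightarrow> real) \<Rightarrow> ('a \<Rightarrow> real) \<Rightarrow> real" where
  "log_potential q w = ln (\<Sum>a\<in>UNIV. w a) - (\<Sum>a\<in>UNIV. q a * ln (w a))"

lemma log_potential_nonneg:
  assumes w: "\<And>a. 0 < w a" and q: "\<And>a. 0 \<le> q a" "(\<Sum>a\<in>UNIV. q a) = 1"
  shows "0 \<le> log_potential q w"
proof -
  have "w a \<le> (\<Sum>a\<in>UNIV. w a)" for a by (rule member_le_sum) (auto intro: less_imp_le w)
  then have "(\<Sum>a\<in>UNIV. q a * ln (w a)) \<le> (\<Sum>a\<in>UNIV. q a * ln (\<Sum>a\<in>UNIV. w a))"
    by (intro sum_mono mult_left_mono q ln_mono w)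
  then show ?thesis by (simp add: log_potential_def sum_distrib_right[symmetric] q(2))
qed

lemma log_potential_le:
  fixes q w :: "'a::finite \<Rightarrow> real"
  assumes w: "\<And>a. l \<le> w a" "\<And>a. w a \<le> u" and l: "0 < l"
    and q: "\<And>a. 0 \<le> q a" "(\<Sum>a\<in>UNIV. q a) = 1"
  shows "log_potential q w \<le> ln (real CARD('a) * u) - ln l"
proof -
  have w_pos: "0 < w a" for a using w(1)[of a] l by linarith
  have "ln l = (\<Sum>a\<in>UNIV. q a * ln l)" by (simp add: sum_distrib_right[symmetric] q(2))
  also have "\<dots> \<le> (\<Sum>a\<in>UNIV. q a * ln (w a))" by (intro sum_mono mult_left_mono q ln_mono w(1) l)
  finally have "ln l \<le> (\<Sum>a\<in>UNIV. q a * ln (w a))" .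
  moreover have "(\<Sum>a\<in>UNIV. w a) \<le> (\<Sum>a\<in>(UNIV::'a set). u)" by (intro sum_mono w(2))
  then have "ln (\<Sum>a\<in>UNIV. w a) \<le> ln (real CARD('a) * u)" by (simp add: ln_mono sum_pos w_pos)
  ultimately show ?thesis unfolding log_potential_def by linarith
qed

text \<open>The one-step inequality of Prod: z - z^2 \<le> ln (1 + z) bounds the comparator term and
  ln x \<le> x - 1 bounds the normaliser.\<close>
lemma log_potential_mult_le:
  assumes w: "\<And>a. 0 < w a" and q: "\<And>a. 0 \<le> q a" "(\<Sum>a\<in>UNIV. q a) = 1"
    and z: "\<And>a. \<bar>z a\<bar> \<le> 1/2"
  shows "log_potential q (\<lambda>a. w a * (1 + z a))
    \<le> log_potential q w - (\<Sum>a\<in>UNIV. (q a - w a / (\<Sum>a\<in>UNIV. w a)) * z a)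
      + (\<Sum>a\<in>UNIV. q a * (z a)\<^sup>2)"
proof -
  define W where "W = (\<Sum>a\<in>UNIV. w a)"
  have W: "0 < W" unfolding W_def using w by (simp add: sum_pos)
  have z1: "0 < 1 + z a" for a using z[of a] by (simp add: abs_le_iff)
  define s where "s = (\<Sum>a\<in>UNIV. w a / W * z a)"
  have "(\<Sum>a\<in>UNIV. w a * (1 + z a)) = W * (1 + s)"
    using W by (simp add: s_def W_def distrib_left sum.distrib sum_divide_distrib[symmetric])
  moreover have "0 < (\<Sum>a\<in>UNIV. w a * (1 + z a))" using w z1 by (simp add: sum_pos)
  ultimately have s: "0 < 1 + s" and "ln (\<Sum>a\<in>UNIV. w a * (1 + z a)) = ln W + ln (1 + s)"
    using W by (simp_all add: ln_mult zero_less_mult_iff)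
  with ln_le_minus_one[OF s] have normaliser: "ln (\<Sum>a\<in>UNIV. w a * (1 + z a)) \<le> ln W + s"
    by simp
  have "z a - (z a)\<^sup>2 \<le> ln (1 + z a)" for a
    using z[of a] by (intro ln_one_plus_ge_sub_square) (simp_all add: abs_le_iff)
  then have "(\<Sum>a\<in>UNIV. q a * (z a - (z a)\<^sup>2)) \<le> (\<Sum>a\<in>UNIV. q a * ln (1 + z a))"
    by (intro sum_mono mult_left_mono q)
  moreover have "q a * ln (w a * (1 + z a)) = q a * ln (w a) + q a * ln (1 + z a)" for a
    unfolding ln_mult_pos[OF w[of a] z1[of a]] by (rule distrib_left)
  ultimately have comparator: "(\<Sum>a\<in>UNIV. q a * ln (w a)) + (\<Sum>a\<in>UNIV. q a * (z a - (z a)\<^sup>2))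
      \<le> (\<Sum>a\<in>UNIV. q a * ln (w a * (1 + z a)))"
    by (simp add: sum.distrib)
  have "(\<Sum>a\<in>UNIV. (q a - w a / W) * z a) = (\<Sum>a\<in>UNIV. q a * z a) - s"
    and "(\<Sum>a\<in>UNIV. q a * (z a - (z a)\<^sup>2)) = (\<Sum>a\<in>UNIV. q a * z a) - (\<Sum>a\<in>UNIV. q a * (z a)\<^sup>2)"
    by (simp_all add: s_def algebra_simps sum_subtractf)
  with normaliser comparator show ?thesis unfolding log_potential_def W_def by linarith
qed

lemma borel_measurable_matrix_vector_mult[measurable (raw)]:
  "f \<in> borel_measurable M \<Longrightarrow> (\<lambda>x. (A::real^'n^'m) *v f x) \<in> borel_measurable M"
  by (rule borel_measurable_continuous_on[OF linear_continuous_on[OF matrix_vector_mul_bounded_linear]])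

locale linprod = linear_features D \<phi>
  for D :: "'x measure" and \<phi> :: "'x \<Rightarrow> 'a::finite \<Rightarrow> real^'d" +
  fixes \<pi>B \<pi>s :: "'x \<Rightarrow> 'a \<Rightarrow> real"
    and adv :: "nat \<Rightarrow> (nat \<Rightarrow> 'x \<times> 'a \<times> 'a) \<Rightarrow> real^'d"
    and \<eta> :: real
  assumes piB: "is_policy \<pi>B" and piB_meas[measurable]: "\<And>a. (\<lambda>x. \<pi>B x a) \<in> borel_measurable D"
    and pis: "is_policy \<pi>s" and pis_meas[measurable]: "\<And>a. (\<lambda>x. \<pi>s x a) \<in> borel_measurable D"
    and rewards: "\<And>t h x a. 0 \<le> adv t h \<bullet> \<phi> x a \<and> adv t h \<bullet> \<phi> x a \<le> 1"
    and V_invertible: "invertible (Vbar D \<phi> \<pi>B)"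
    and eta_pos: "0 < \<eta>"
    and eta_cond: "eta_condition D \<phi> \<pi>B \<eta>"
begin

abbreviation V where "V \<equiv> Vbar D \<phi> \<pi>B"
abbreviation Vinv where "Vinv \<equiv> matrix_inv V"
abbreviation weight where "weight \<equiv> linprod_weight D \<phi> \<pi>B adv \<eta>"
abbreviation learner where "learner \<equiv> linprod_policy D \<phi> \<pi>B adv \<eta>"

lemma abs_reward_le_one: "\<bar>adv t h \<bullet> \<phi> x a\<bar> \<le> 1"
  using rewards[of t h x a] by simp

lemma V_symmetric: "transpose V = V"
  by (rule Vbar_symmetric[OF piB piB_meas])

lemma V_psd: "0 \<le> v \<bullet> (V *v v)"
  by (rule Vbar_psd[OF piB piB_meas])

lemma lambda_min_V_pos: "0 < lambda_min V"
  by (rule lambda_min_pos[OF V_symmetric V_psd V_invertible])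

lemma coverage_nonneg: "0 \<le> C_phi D \<phi> \<pi>s \<pi>B"
  by (rule C_phi_nonneg[OF pis pis_meas piB piB_meas V_invertible])

lemma V_Vinv: "V *v (Vinv *v y) = y"
  by (simp add: matrix_vector_mul_assoc matrix_inv_right[OF V_invertible])

lemma inner_Vinv_commute: "u \<bullet> (Vinv *v v) = (Vinv *v u) \<bullet> v"
  using transpose_matrix_inv_symmetric[OF V_symmetric V_invertible]
  unfolding symmetric_matrix_iff_inner by (metis inner_commute)

definition estimate :: "real^'d \<Rightarrow> 'x \<Rightarrow> 'a \<Rightarrow> real^'d" where
  "estimate \<theta> x b = Vinv *v ((\<theta> \<bullet> \<phi> x b) *\<^sub>R \<phi> x b)"

lemma estimate_meas[measurable]: "(\<lambda>x. estimate \<theta> x b) \<in> borel_measurable D"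
  unfolding estimate_def by measurable

lemma inner_estimate: "estimate \<theta> x b \<bullet> y = (\<theta> \<bullet> \<phi> x b) * (\<phi> x b \<bullet> (Vinv *v y))"
  unfolding estimate_def inner_Vinv_commute[symmetric] by (simp add: matrix_vector_mult_scaleR)

lemma abs_inner_estimate_le:
  assumes "\<bar>\<theta> \<bullet> \<phi> x b\<bar> \<le> 1"
  shows "\<bar>estimate \<theta> x b \<bullet> y\<bar> \<le> norm (\<phi> x b) * norm y / lambda_min V"
proof -
  have scaled: "norm ((\<theta> \<bullet> \<phi> x b) *\<^sub>R \<phi> x b) \<le> norm (\<phi> x b)"
    unfolding norm_scaleR by (rule mult_left_le_one_le) (simp_all add: assms)
  have "norm (estimate \<theta> x b) \<le> norm ((\<theta> \<bullet> \<phi> x b) *\<^sub>R \<phi> x b) / lambda_min V"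
    unfolding estimate_def by (rule norm_matrix_inv_mult_le[OF V_symmetric V_psd V_invertible])
  also have "\<dots> \<le> norm (\<phi> x b) / lambda_min V"
    using scaled lambda_min_V_pos by (intro divide_right_mono) simp_all
  finally have "norm (estimate \<theta> x b) * norm y \<le> norm (\<phi> x b) / lambda_min V * norm y"
    by (rule mult_right_mono) simp
  with Cauchy_Schwarz_ineq2[of "estimate \<theta> x b" y] show ?thesis
    unfolding times_divide_eq_left by linarith
qed

lemma abs_inner_estimate_bounded:
  assumes "\<And>x b. \<bar>\<theta> \<bullet> \<phi> x b\<bar> \<le> 1"
  obtains K where "\<And>x b. \<bar>estimate \<theta> x b \<bullet> y\<bar> \<le> K"
proof -
  obtain B where B: "0 \<le> B" "\<And>x a. norm (\<phi> x a) \<le> B" using phi_bound by blast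
  have "norm (\<phi> x b) * norm y / lambda_min V \<le> B * norm y / lambda_min V" for x b
    using lambda_min_V_pos by (intro divide_right_mono mult_right_mono B) simp_all
  then have "\<bar>estimate \<theta> x b \<bullet> y\<bar> \<le> B * norm y / lambda_min V" for x b
    by (rule order_trans[OF abs_inner_estimate_le[OF assms]])
  then show thesis by (rule that)
qed

text \<open>The step-size condition is exactly what keeps every factor 1 + \<eta> \<langle>\<theta>, \<phi>\<rangle>
  of the weights in [1/2, 3/2].\<close>
lemma eta_estimate_bound:
  assumes "\<bar>\<theta> \<bullet> \<phi> x b\<bar> \<le> 1"
  shows "\<bar>\<eta> * (estimate \<theta> x b \<bullet> \<phi> x' a')\<bar> \<le> 1/2"
proof -
  define S where "S = (SUP p\<in>UNIV. (norm (\<phi> (fst p) (snd p)))\<^sup>2)"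
  obtain B where B: "0 \<le> B" "\<And>x a. norm (\<phi> x a) \<le> B" using phi_bound by blast
  have "bdd_above (range (\<lambda>p. (norm (\<phi> (fst p) (snd p)))\<^sup>2))"
    using B by (intro bdd_aboveI[where M="B\<^sup>2"]) (auto intro!: power_mono)
  then have "(\<lambda>p. (norm (\<phi> (fst p) (snd p)))\<^sup>2) (x, a) \<le> S" for x a
    unfolding S_def by (rule cSUP_upper[OF UNIV_I])
  then have sq: "(norm (\<phi> x a))\<^sup>2 \<le> S" for x a by simp
  have "2 * (norm (\<phi> x b) * norm (\<phi> x' a')) \<le> 2 * S"
    using sum_squares_bound[of "norm (\<phi> x b)" "norm (\<phi> x' a')"] sq[of x b] sq[of x' a'] by simp
  then have "norm (\<phi> x b) * norm (\<phi> x' a') / lambda_min V \<le> S / lambda_min V"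
    using lambda_min_V_pos by (intro divide_right_mono) simp_all
  with abs_inner_estimate_le[OF assms, of "\<phi> x' a'"]
  have "\<bar>estimate \<theta> x b \<bullet> \<phi> x' a'\<bar> \<le> S / lambda_min V" by linarith
  then have "\<eta> * \<bar>estimate \<theta> x b \<bullet> \<phi> x' a'\<bar> \<le> \<eta> * (S / lambda_min V)"
    using eta_pos by (intro mult_left_mono) simp_all
  also have "\<dots> \<le> 1/2"
    using eta_cond lambda_min_V_pos by (simp add: eta_condition_def S_def field_simps)
  finally show ?thesis using eta_pos by (simp add: abs_mult)
qed

lemma eta_theta_hat_bound: "\<bar>\<eta> * (theta_hat D \<phi> \<pi>B adv h k \<bullet> \<phi> x a)\<bar> \<le> 1/2"
proof -
  obtain x' a' b where "h k = (x', a', b)" by (metis prod_cases3)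
  then have "theta_hat D \<phi> \<pi>B adv h k = estimate (adv k (restrict h {..<k})) x' b"
    by (simp add: theta_hat_def estimate_def)
  then show ?thesis by (simp only: eta_estimate_bound[OF abs_reward_le_one])
qed

lemma weight_ge: "(1/2)^t \<le> weight h t x a"
  and weight_le: "weight h t x a \<le> (3/2)^t"
proof -
  have factor: "1/2 \<le> 1 + \<eta> * (theta_hat D \<phi> \<pi>B adv h k \<bullet> \<phi> x a)"
    "1 + \<eta> * (theta_hat D \<phi> \<pi>B adv h k \<bullet> \<phi> x a) \<le> 3/2" for k
    using eta_theta_hat_bound[of h k x a] by (simp_all add: abs_le_iff)
  have "(\<Prod>k<t. 1/2 :: real) \<le> weight h t x a"
    unfolding linprod_weight_def by (intro prod_mono) (use factor in simp)
  then show "(1/2)^t \<le> weight h t x a" by simp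
  have "weight h t x a \<le> (\<Prod>k<t. 3/2 :: real)"
    unfolding linprod_weight_def using factor by (intro prod_mono) (simp add: order_trans[OF _ factor(1)])
  then show "weight h t x a \<le> (3/2)^t" by simp
qed

lemma weight_pos: "0 < weight h t x a"
  using weight_ge[of t h x a] zero_less_power[of "1/2::real" t] by linarith

lemma weight_sum_pos: "0 < (\<Sum>a\<in>UNIV. weight h t x a)"
  by (rule sum_pos) (simp_all add: weight_pos)

lemma learner_policy: "is_policy (learner h t)"
  unfolding is_policy_def linprod_policy_def
proof (intro conjI allI)
  show "0 \<le> weight h t x a / (\<Sum>a\<in>UNIV. weight h t x a)" for x a
    by (intro divide_nonneg_pos less_imp_le weight_pos weight_sum_pos)
  show "(\<Sum>a\<in>UNIV. weight h t x a / (\<Sum>a\<in>UNIV. weight h t x a)) = 1" for x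
    using weight_sum_pos[of h t x] by (simp add: sum_divide_distrib[symmetric])
qed

lemma weight_meas[measurable]: "(\<lambda>x. weight h t x a) \<in> borel_measurable D"
  unfolding linprod_weight_def by measurable

lemma learner_meas[measurable]: "(\<lambda>x. learner h t x a) \<in> borel_measurable D"
  unfolding linprod_policy_def by measurable

definition potential :: "(nat \<Rightarrow> 'x \<times> 'a \<times> 'a) \<Rightarrow> nat \<Rightarrow> 'x \<Rightarrow> real" where
  "potential h t x = log_potential (\<pi>s x) (weight h t x)"

definition expected_potential :: "(nat \<Rightarrow> 'x \<times> 'a \<times> 'a) \<Rightarrow> nat \<Rightarrow> real" where
  "expected_potential h t = (\<integral>x. potential h t x \<partial>D)"

lemma potential_nonneg: "0 \<le> potential h t x"
  unfolding potential_def
  by (intro log_potential_nonneg weight_pos is_policy_nonneg[OF pis] is_policy_sum[OF pis])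

lemma potential_le: "potential h t x \<le> ln (real CARD('a)) + t * ln 3"
proof -
  have "potential h t x \<le> ln (real CARD('a) * (3/2)^t) - ln ((1/2)^t)"
    unfolding potential_def
    by (intro log_potential_le weight_ge weight_le is_policy_nonneg[OF pis] is_policy_sum[OF pis]) simp
  also have "\<dots> = ln (real CARD('a)) + t * ln 3"
    by (simp add: ln_mult_pos ln_realpow ln_div algebra_simps)
  finally show ?thesis .
qed

lemma potential_meas[measurable]: "(\<lambda>x. potential h t x) \<in> borel_measurable D"
  unfolding potential_def log_potential_def by measurable

lemma integrable_potential: "integrable D (potential h t)"
proof (rule integrable_real_bounded)
  show "potential h t \<in> borel_measurable D" by measurable
  show "\<bar>potential h t x\<bar> \<le> ln (real CARD('a)) + t * ln 3" for x
    using potential_nonneg[of h t x] potential_le[of h t x] by simp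
qed

lemma expected_potential_nonneg: "0 \<le> expected_potential h t"
  unfolding expected_potential_def by (intro integral_nonneg_AE AE_I2 potential_nonneg)

lemma expected_potential_zero: "expected_potential h 0 = ln (real CARD('a))"
  by (simp add: expected_potential_def potential_def log_potential_def linprod_weight_def
      is_policy_sum[OF pis] prob_space)

lemma theta_hat_fun_upd:
  assumes "\<forall>k\<ge>t. h k = undefined"
  shows "k < t \<Longrightarrow> theta_hat D \<phi> \<pi>B adv (h(t := (x, a, b))) k = theta_hat D \<phi> \<pi>B adv h k"
    and "theta_hat D \<phi> \<pi>B adv (h(t := (x, a, b))) t = estimate (adv t h) x b"
proof -
  show "theta_hat D \<phi> \<pi>B adv (h(t := (x, a, b))) k = theta_hat D \<phi> \<pi>B adv h k" if "k < t"
  proof -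
    have "restrict (h(t := (x, a, b))) {..<k} = restrict h {..<k}" "(h(t := (x, a, b))) k = h k"
      using that by (auto simp: restrict_def fun_eq_iff)
    then show ?thesis by (simp add: theta_hat_def)
  qed
  have "restrict (h(t := (x, a, b))) {..<t} = h"
    using assms by (auto simp: restrict_def fun_eq_iff)
  then show "theta_hat D \<phi> \<pi>B adv (h(t := (x, a, b))) t = estimate (adv t h) x b"
    by (simp add: theta_hat_def estimate_def)
qed

lemma weight_fun_upd:
  assumes "\<forall>k\<ge>t. h k = undefined"
  shows "weight (h(t := (x, a, b))) (Suc t) x' a'
    = weight h t x' a' * (1 + \<eta> * (estimate (adv t h) x b \<bullet> \<phi> x' a'))"
proof -
  have "(\<Prod>k<t. 1 + \<eta> * (theta_hat D \<phi> \<pi>B adv (h(t := (x, a, b))) k \<bullet> \<phi> x' a'))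
      = (\<Prod>k<t. 1 + \<eta> * (theta_hat D \<phi> \<pi>B adv h k \<bullet> \<phi> x' a'))"
    by (rule prod.cong) (simp_all add: theta_hat_fun_upd(1)[OF assms])
  then show ?thesis
    unfolding linprod_weight_def prod.lessThan_Suc theta_hat_fun_upd(2)[OF assms] by simp
qed

text \<open>Here x and b are the context and behaviour action of round t, and x' is the context at
  which the potential is evaluated.\<close>
definition next_potential_bound :: "(nat \<Rightarrow> 'x \<times> 'a \<times> 'a) \<Rightarrow> nat \<Rightarrow> 'x \<Rightarrow> 'a \<Rightarrow> 'x \<Rightarrow> real" where
  "next_potential_bound h t x b x' = potential h t x'
     - \<eta> * (\<Sum>a\<in>UNIV. (\<pi>s x' a - learner h t x' a) * (estimate (adv t h) x b \<bullet> \<phi> x' a))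
     + \<eta>\<^sup>2 * (\<Sum>a\<in>UNIV. \<pi>s x' a * (estimate (adv t h) x b \<bullet> \<phi> x' a)\<^sup>2)"

lemma potential_fun_upd_le:
  assumes "\<forall>k\<ge>t. h k = undefined"
  shows "potential (h(t := (x, a, b))) (Suc t) x' \<le> next_potential_bound h t x b x'"
proof -
  define z where "z a' = \<eta> * (estimate (adv t h) x b \<bullet> \<phi> x' a')" for a'
  have "potential (h(t := (x, a, b))) (Suc t) x' = log_potential (\<pi>s x') (\<lambda>a'. weight h t x' a' * (1 + z a'))"
    unfolding potential_def weight_fun_upd[OF assms] z_def ..
  also have "\<dots> \<le> potential h t x'
      - (\<Sum>a'\<in>UNIV. (\<pi>s x' a' - weight h t x' a' / (\<Sum>a\<in>UNIV. weight h t x' a)) * z a')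
      + (\<Sum>a'\<in>UNIV. \<pi>s x' a' * (z a')\<^sup>2)"
    unfolding potential_def z_def
    by (intro log_potential_mult_le weight_pos is_policy_nonneg[OF pis] is_policy_sum[OF pis]
        eta_estimate_bound abs_reward_le_one)
  also have "\<dots> = next_potential_bound h t x b x'"
    by (simp add: next_potential_bound_def linprod_policy_def z_def sum_distrib_left
        power_mult_distrib mult_ac)
  finally show ?thesis .
qed

lemma integral_estimate: "(\<integral>x. (\<Sum>b\<in>UNIV. \<pi>B x b * (estimate \<theta> x b \<bullet> y)) \<partial>D) = \<theta> \<bullet> y"
proof -
  have "(\<integral>x. (\<Sum>b\<in>UNIV. \<pi>B x b * (estimate \<theta> x b \<bullet> y)) \<partial>D) = \<theta> \<bullet> (V *v (Vinv *v y))"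
    unfolding inner_Vbar[OF piB piB_meas] inner_estimate by (simp add: mult_ac)
  then show ?thesis by (simp add: V_Vinv)
qed

lemma integrable_estimate_power:
  assumes "\<And>x b. \<bar>\<theta> \<bullet> \<phi> x b\<bar> \<le> 1"
  shows "integrable D (\<lambda>x. \<Sum>b\<in>UNIV. \<pi>B x b * (estimate \<theta> x b \<bullet> y) ^ k)"
proof -
  obtain K where K: "\<And>x b. \<bar>estimate \<theta> x b \<bullet> y\<bar> \<le> K"
    using abs_inner_estimate_bounded[OF assms] by blast
  show ?thesis
  proof (rule integrable_real_bounded)
    show "(\<lambda>x. \<Sum>b\<in>UNIV. \<pi>B x b * (estimate \<theta> x b \<bullet> y) ^ k) \<in> borel_measurable D"
      by measurable
    have "\<bar>(estimate \<theta> x b \<bullet> y) ^ k\<bar> \<le> K ^ k" for x b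
      unfolding power_abs by (intro power_mono K) simp
    then show "\<bar>\<Sum>b\<in>UNIV. \<pi>B x b * (estimate \<theta> x b \<bullet> y) ^ k\<bar> \<le> K ^ k" for x
      by (rule abs_policy_sum_le[OF piB])
  qed
qed

lemma integral_estimate_sq_le:
  assumes \<theta>: "\<And>x b. \<bar>\<theta> \<bullet> \<phi> x b\<bar> \<le> 1"
  shows "(\<integral>x. (\<Sum>b\<in>UNIV. \<pi>B x b * (estimate \<theta> x b \<bullet> y)\<^sup>2) \<partial>D) \<le> y \<bullet> (Vinv *v y)"
proof -
  define u where "u = Vinv *v y"
  have "(\<integral>x. (\<Sum>b\<in>UNIV. \<pi>B x b * (estimate \<theta> x b \<bullet> y)\<^sup>2) \<partial>D)
      \<le> (\<integral>x. (\<Sum>b\<in>UNIV. \<pi>B x b * ((u \<bullet> \<phi> x b) * (\<phi> x b \<bullet> u))) \<partial>D)"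
  proof (intro integral_mono sum_mono mult_left_mono is_policy_nonneg[OF piB])
    show "integrable D (\<lambda>x. \<Sum>b\<in>UNIV. \<pi>B x b * (estimate \<theta> x b \<bullet> y)\<^sup>2)"
      by (rule integrable_estimate_power[OF \<theta>])
    show "integrable D (\<lambda>x. \<Sum>b\<in>UNIV. \<pi>B x b * ((u \<bullet> \<phi> x b) * (\<phi> x b \<bullet> u)))"
      by (rule integrable_bilinear_Vbar_integrand[OF piB piB_meas])
    fix x b
    have "(\<theta> \<bullet> \<phi> x b)\<^sup>2 \<le> 1" using \<theta>[of x b] by (simp add: abs_square_le_1)
    then have "(\<theta> \<bullet> \<phi> x b)\<^sup>2 * (\<phi> x b \<bullet> u)\<^sup>2 \<le> 1 * (\<phi> x b \<bullet> u)\<^sup>2"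
      by (rule mult_right_mono) simp
    then show "(estimate \<theta> x b \<bullet> y)\<^sup>2 \<le> (u \<bullet> \<phi> x b) * (\<phi> x b \<bullet> u)"
      unfolding inner_estimate u_def
      by (simp add: power_mult_distrib inner_commute[of "Vinv *v y"] power2_eq_square mult_ac)
  qed
  also have "\<dots> = u \<bullet> (V *v u)" by (rule inner_Vbar[OF piB piB_meas, symmetric])
  also have "\<dots> = y \<bullet> (Vinv *v y)" by (simp add: u_def V_Vinv inner_commute)
  finally show ?thesis .
qed

definition instant_regret :: "(nat \<Rightarrow> 'x \<times> 'a \<times> 'a) \<Rightarrow> nat \<Rightarrow> 'x \<Rightarrow> real" where
  "instant_regret h t x = (\<Sum>a\<in>UNIV. (\<pi>s x a - learner h t x a) * (adv t h \<bullet> \<phi> x a))"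

lemma integrable_instant_regret: "integrable D (instant_regret h t)"
proof (rule integrable_real_bounded)
  show "instant_regret h t \<in> borel_measurable D"
    unfolding instant_regret_def by measurable
  show "\<bar>instant_regret h t x\<bar> \<le> 2 * 1" for x
    unfolding instant_regret_def by (intro abs_policy_diff_sum_le pis learner_policy abs_reward_le_one)
qed

lemma abs_next_potential_bound_le:
  "\<bar>next_potential_bound h t x b x'\<bar> \<le> ln (real CARD('a)) + t * ln 3 + 2"
proof -
  define z where "z a = \<eta> * (estimate (adv t h) x b \<bullet> \<phi> x' a)" for a
  have z: "\<bar>z a\<bar> \<le> 1/2" for a unfolding z_def by (intro eta_estimate_bound abs_reward_le_one)
  have "\<bar>(z a)\<^sup>2\<bar> \<le> 1" for a
    using z[of a] by (simp add: abs_square_le_1)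
  then have "\<bar>\<Sum>a\<in>UNIV. \<pi>s x' a * (z a)\<^sup>2\<bar> \<le> 1" by (rule abs_policy_sum_le[OF pis])
  then have "\<bar>\<eta>\<^sup>2 * (\<Sum>a\<in>UNIV. \<pi>s x' a * (estimate (adv t h) x b \<bullet> \<phi> x' a)\<^sup>2)\<bar> \<le> 1"
    by (simp add: z_def sum_distrib_left power_mult_distrib mult_ac)
  moreover have "\<bar>\<Sum>a\<in>UNIV. (\<pi>s x' a - learner h t x' a) * z a\<bar> \<le> 2 * (1/2)"
    by (rule abs_policy_diff_sum_le[OF pis learner_policy]) (rule z)
  then have "\<bar>\<eta> * (\<Sum>a\<in>UNIV. (\<pi>s x' a - learner h t x' a) * (estimate (adv t h) x b \<bullet> \<phi> x' a))\<bar> \<le> 1"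
    by (simp add: z_def sum_distrib_left mult_ac)
  ultimately show ?thesis
    using potential_nonneg[of h t x'] potential_le[of h t x'] unfolding next_potential_bound_def
    by linarith
qed

lemma integral_next_potential_bound_le:
  "(\<integral>x. (\<Sum>b\<in>UNIV. \<pi>B x b * next_potential_bound h t x b x') \<partial>D)
    \<le> potential h t x' - \<eta> * instant_regret h t x'
      + \<eta>\<^sup>2 * (\<Sum>a\<in>UNIV. \<pi>s x' a * (\<phi> x' a \<bullet> (Vinv *v \<phi> x' a)))"
proof -
  define G where "G k a x = (\<Sum>b\<in>UNIV. \<pi>B x b * (estimate (adv t h) x b \<bullet> \<phi> x' a) ^ k)" for k a x
  have G_int: "integrable D (G k a)" for k a
    unfolding G_def by (intro integrable_estimate_power abs_reward_le_one)
  have swap: "(\<Sum>b\<in>UNIV. \<pi>B x b * (\<Sum>a\<in>UNIV. c a * f a b)) = (\<Sum>a\<in>UNIV. c a * (\<Sum>b\<in>UNIV. \<pi>B x b * f a b))"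
    for x and c :: "'a \<Rightarrow> real" and f :: "'a \<Rightarrow> 'a \<Rightarrow> real"
    by (simp add: sum_distrib_left mult_ac) (rule sum.swap)
  have "(\<Sum>b\<in>UNIV. \<pi>B x b * next_potential_bound h t x b x')
      = potential h t x' * (\<Sum>b\<in>UNIV. \<pi>B x b)
        - \<eta> * (\<Sum>b\<in>UNIV. \<pi>B x b * (\<Sum>a\<in>UNIV. (\<pi>s x' a - learner h t x' a) * (estimate (adv t h) x b \<bullet> \<phi> x' a)))
        + \<eta>\<^sup>2 * (\<Sum>b\<in>UNIV. \<pi>B x b * (\<Sum>a\<in>UNIV. \<pi>s x' a * (estimate (adv t h) x b \<bullet> \<phi> x' a)\<^sup>2))" for x
    unfolding next_potential_bound_def
    by (simp add: algebra_simps sum.distrib sum_subtractf sum_distrib_left sum_distrib_right)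
  also have "\<dots> x = potential h t x' - \<eta> * (\<Sum>a\<in>UNIV. (\<pi>s x' a - learner h t x' a) * G 1 a x)
        + \<eta>\<^sup>2 * (\<Sum>a\<in>UNIV. \<pi>s x' a * G 2 a x)" for x
    unfolding swap G_def by (simp add: is_policy_sum[OF piB])
  finally have "(\<integral>x. (\<Sum>b\<in>UNIV. \<pi>B x b * next_potential_bound h t x b x') \<partial>D)
      = potential h t x' - \<eta> * (\<Sum>a\<in>UNIV. (\<pi>s x' a - learner h t x' a) * integral\<^sup>L D (G 1 a))
        + \<eta>\<^sup>2 * (\<Sum>a\<in>UNIV. \<pi>s x' a * integral\<^sup>L D (G 2 a))"
    using G_int by (simp add: prob_space)
  also have "\<dots> \<le> potential h t x' - \<eta> * instant_regret h t x'
      + \<eta>\<^sup>2 * (\<Sum>a\<in>UNIV. \<pi>s x' a * (\<phi> x' a \<bullet> (Vinv *v \<phi> x' a)))"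
  proof -
    have "integral\<^sup>L D (G 1 a) = adv t h \<bullet> \<phi> x' a" for a
      unfolding G_def by (simp add: integral_estimate)
    moreover have "integral\<^sup>L D (G 2 a) \<le> \<phi> x' a \<bullet> (Vinv *v \<phi> x' a)" for a
      unfolding G_def by (intro integral_estimate_sq_le abs_reward_le_one)
    then have "(\<Sum>a\<in>UNIV. \<pi>s x' a * integral\<^sup>L D (G 2 a)) \<le> (\<Sum>a\<in>UNIV. \<pi>s x' a * (\<phi> x' a \<bullet> (Vinv *v \<phi> x' a)))"
      by (intro sum_mono mult_left_mono is_policy_nonneg[OF pis])
    ultimately show ?thesis
      unfolding instant_regret_def by (simp add: mult_left_mono)
  qed
  finally show ?thesis .
qed

lemma integrable_next_potential_bound: "integrable D (next_potential_bound h t x b)"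
proof (rule integrable_real_bounded)
  show "next_potential_bound h t x b \<in> borel_measurable D"
    unfolding next_potential_bound_def by measurable
qed (rule abs_next_potential_bound_le)

lemma integrable_pair_next_potential_bound:
  "integrable (D \<Otimes>\<^sub>M D) (\<lambda>(x, x'). \<Sum>b\<in>UNIV. \<pi>B x b * next_potential_bound h t x b x')"
proof -
  interpret DD: pair_prob_space D D by unfold_locales
  have "finite_measure (D \<Otimes>\<^sub>M D)" by unfold_locales
  then show ?thesis
  proof (rule finite_measure.integrable_real_bounded)
    show "(\<lambda>(x, x'). \<Sum>b\<in>UNIV. \<pi>B x b * next_potential_bound h t x b x') \<in> borel_measurable (D \<Otimes>\<^sub>M D)"
      unfolding next_potential_bound_def potential_def log_potential_def by measurable
    show "\<bar>(\<lambda>(x, x'). \<Sum>b\<in>UNIV. \<pi>B x b * next_potential_bound h t x b x') p\<bar>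
        \<le> ln (real CARD('a)) + t * ln 3 + 2" for p
      by (cases p) (simp add: abs_policy_sum_le[OF piB] abs_next_potential_bound_le)
  qed
qed

definition expected_next_potential_bound :: "(nat \<Rightarrow> 'x \<times> 'a \<times> 'a) \<Rightarrow> nat \<Rightarrow> 'x \<Rightarrow> real" where
  "expected_next_potential_bound h t x = (\<Sum>b\<in>UNIV. \<pi>B x b * (\<integral>x'. next_potential_bound h t x b x' \<partial>D))"

lemma expected_next_potential_bound_eq_integral:
  "expected_next_potential_bound h t x = (\<integral>x'. (\<Sum>b\<in>UNIV. \<pi>B x b * next_potential_bound h t x b x') \<partial>D)"
  unfolding expected_next_potential_bound_def by (simp add: integrable_next_potential_bound)

lemma integrable_expected_next_potential_bound: "integrable D (expected_next_potential_bound h t)"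
proof -
  interpret DD: pair_prob_space D D by unfold_locales
  show ?thesis
    unfolding expected_next_potential_bound_eq_integral[abs_def]
    by (rule DD.integrable_fst[OF integrable_pair_next_potential_bound])
qed

lemma integral_expected_next_potential_bound_le:
  "(\<integral>x. expected_next_potential_bound h t x \<partial>D)
    \<le> expected_potential h t - \<eta> * (\<integral>x. instant_regret h t x \<partial>D) + \<eta>\<^sup>2 * C_phi D \<phi> \<pi>s \<pi>B"
proof -
  interpret DD: pair_prob_space D D by unfold_locales
  have "(\<integral>x. expected_next_potential_bound h t x \<partial>D)
      = (\<integral>x'. (\<integral>x. (\<Sum>b\<in>UNIV. \<pi>B x b * next_potential_bound h t x b x') \<partial>D) \<partial>D)"
    unfolding expected_next_potential_bound_eq_integral
    by (rule DD.Fubini_integral[OF integrable_pair_next_potential_bound, symmetric])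
  also have "\<dots> \<le> (\<integral>x'. potential h t x' - \<eta> * instant_regret h t x'
      + \<eta>\<^sup>2 * (\<Sum>a\<in>UNIV. \<pi>s x' a * (\<phi> x' a \<bullet> (Vinv *v \<phi> x' a))) \<partial>D)"
    using integrable_potential integrable_instant_regret integrable_trace_Vbar_integrand[OF pis pis_meas]
    by (intro integral_mono DD.integrable_snd[OF integrable_pair_next_potential_bound]
        integral_next_potential_bound_le) auto
  also have "\<dots> = expected_potential h t - \<eta> * (\<integral>x. instant_regret h t x \<partial>D) + \<eta>\<^sup>2 * C_phi D \<phi> \<pi>s \<pi>B"
    using integrable_potential integrable_instant_regret integrable_trace_Vbar_integrand[OF pis pis_meas]
    by (simp add: expected_potential_def C_phi_def trace_mult_Vbar[OF pis pis_meas])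
  finally show ?thesis .
qed

text \<open>If the integrand of a round is not integrable, the Bochner integral is 0 and the bound holds
  trivially, so no measurability of the future regret in the history is needed.\<close>
lemma regret_to_go_Suc_le:
  assumes hist: "\<forall>k\<ge>t. h k = undefined" and c: "0 \<le> c"
    and IH: "\<And>x a b. \<eta> * regret_to_go D \<phi> \<pi>B \<pi>s adv \<eta> m (Suc t) (h(t := (x, a, b)))
      \<le> expected_potential (h(t := (x, a, b))) (Suc t) + c"
  shows "\<eta> * regret_to_go D \<phi> \<pi>B \<pi>s adv \<eta> (Suc m) t h
    \<le> expected_potential h t + \<eta>\<^sup>2 * C_phi D \<phi> \<pi>s \<pi>B + c"
proof -
  define F where "F x = (\<Sum>a\<in>UNIV. \<Sum>b\<in>UNIV. learner h t x a * \<pi>B x b *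
    (instant_regret h t x + regret_to_go D \<phi> \<pi>B \<pi>s adv \<eta> m (Suc t) (h(t := (x, a, b)))))" for x
  have R: "regret_to_go D \<phi> \<pi>B \<pi>s adv \<eta> (Suc m) t h = integral\<^sup>L D F"
    unfolding F_def[abs_def] instant_regret_def by simp
  have pointwise: "\<eta> * F x \<le> \<eta> * instant_regret h t x + expected_next_potential_bound h t x + c" for x
  proof -
    define Z where "Z b = \<eta> * instant_regret h t x + (\<integral>x'. next_potential_bound h t x b x' \<partial>D) + c" for b
    have next_potential: "expected_potential (h(t := (x, a, b))) (Suc t)
        \<le> (\<integral>x'. next_potential_bound h t x b x' \<partial>D)" for a b
      unfolding expected_potential_def
      by (intro integral_mono integrable_potential integrable_next_potential_bound
          potential_fun_upd_le hist)
    have step: "\<eta> * (instant_regret h t x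
        + regret_to_go D \<phi> \<pi>B \<pi>s adv \<eta> m (Suc t) (h(t := (x, a, b)))) \<le> Z b" for a b
      using IH[of x a b] next_potential[of a b] unfolding Z_def distrib_left by linarith
    have "\<eta> * F x \<le> (\<Sum>a\<in>UNIV. \<Sum>b\<in>UNIV. learner h t x a * \<pi>B x b * Z b)"
      unfolding F_def sum_distrib_left
    proof (intro sum_mono)
      fix a b
      have "0 \<le> learner h t x a * \<pi>B x b"
        by (intro mult_nonneg_nonneg is_policy_nonneg[OF piB] is_policy_nonneg[OF learner_policy])
      from mult_left_mono[OF step this]
      show "\<eta> * (learner h t x a * \<pi>B x b * (instant_regret h t x
          + regret_to_go D \<phi> \<pi>B \<pi>s adv \<eta> m (Suc t) (h(t := (x, a, b)))))
        \<le> learner h t x a * \<pi>B x b * Z b"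
        by (simp add: mult_ac)
    qed
    also have "\<dots> = (\<Sum>a\<in>UNIV. learner h t x a) * (\<Sum>b\<in>UNIV. \<pi>B x b * Z b)"
      by (simp add: sum_product mult.assoc)
    also have "\<dots> = \<eta> * instant_regret h t x + expected_next_potential_bound h t x + c"
      by (simp add: Z_def expected_next_potential_bound_def is_policy_sum[OF learner_policy]
          is_policy_sum[OF piB] distrib_left sum.distrib sum_distrib_right[symmetric])
    finally show ?thesis .
  qed
  show ?thesis
  proof (cases "integrable D F")
    case False
    then show ?thesis using R expected_potential_nonneg[of h t] coverage_nonneg c
      by (simp add: not_integrable_integral_eq)
  next
    case True
    have "\<eta> * integral\<^sup>L D F = (\<integral>x. \<eta> * F x \<partial>D)" by simp
    also have "\<dots> \<le> (\<integral>x. \<eta> * instant_regret h t x + expected_next_potential_bound h t x + c \<partial>D)"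
      using True integrable_instant_regret integrable_expected_next_potential_bound
      by (intro integral_mono pointwise) auto
    also have "\<dots> = \<eta> * (\<integral>x. instant_regret h t x \<partial>D) + (\<integral>x. expected_next_potential_bound h t x \<partial>D) + c"
      using integrable_instant_regret integrable_expected_next_potential_bound by (simp add: prob_space)
    finally show ?thesis
      unfolding R using integral_expected_next_potential_bound_le[of h t] by linarith
  qed
qed

lemma regret_to_go_le:
  "\<forall>k\<ge>t. h k = undefined \<Longrightarrow>
    \<eta> * regret_to_go D \<phi> \<pi>B \<pi>s adv \<eta> m t h \<le> expected_potential h t + \<eta>\<^sup>2 * m * C_phi D \<phi> \<pi>s \<pi>B"
proof (induction m arbitrary: t h)
  case 0
  then show ?case by (simp add: expected_potential_nonneg)
next
  case (Suc m)
  have "0 \<le> \<eta>\<^sup>2 * m * C_phi D \<phi> \<pi>s \<pi>B"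
    using coverage_nonneg by simp
  moreover have "\<forall>k\<ge>Suc t. (h(t := e)) k = undefined" for e using Suc.prems by simp
  ultimately have "\<eta> * regret_to_go D \<phi> \<pi>B \<pi>s adv \<eta> (Suc m) t h
      \<le> expected_potential h t + \<eta>\<^sup>2 * C_phi D \<phi> \<pi>s \<pi>B + \<eta>\<^sup>2 * m * C_phi D \<phi> \<pi>s \<pi>B"
    using Suc.prems by (intro regret_to_go_Suc_le Suc.IH) auto
  then show ?case by (simp add: algebra_simps)
qed

lemma regret_bound:
  "regret_to_go D \<phi> \<pi>B \<pi>s adv \<eta> n 0 (\<lambda>_. undefined)
    \<le> ln (real CARD('a)) / \<eta> + \<eta> * n * C_phi D \<phi> \<pi>s \<pi>B"
proof -
  have "\<eta> * regret_to_go D \<phi> \<pi>B \<pi>s adv \<eta> n 0 (\<lambda>_. undefined)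
      \<le> \<eta> * (ln (real CARD('a)) / \<eta> + \<eta> * n * C_phi D \<phi> \<pi>s \<pi>B)"
    using regret_to_go_le[of 0 "\<lambda>_. undefined" n] eta_pos
    by (simp add: expected_potential_zero power2_eq_square algebra_simps)
  then show ?thesis using eta_pos by simp
qed

end

lemma (in prob_space) integral_le_nonneg_const:
  fixes f :: "'a \<Rightarrow> real"
  assumes "\<And>x. f x \<le> c" "0 \<le> c"
  shows "(\<integral>x. f x \<partial>M) \<le> c"
  by (cases "integrable M f") (simp_all add: integral_le_const assms not_integrable_integral_eq)

lemma expected_regret_le:
  fixes \<phi> :: "'x \<Rightarrow> 'a::finite \<Rightarrow> real^'d"
  assumes U: "prob_space U" and linprod: "\<And>u. linprod D \<phi> \<pi>B \<pi>s (adv u) \<eta>"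
  shows "expected_regret U D \<phi> \<pi>B \<pi>s adv \<eta> n
    \<le> ln (real CARD('a)) / \<eta> + \<eta> * n * C_phi D \<phi> \<pi>s \<pi>B"
proof -
  interpret some_seed: linprod D \<phi> \<pi>B \<pi>s "adv undefined" \<eta> by (rule linprod)
  have "0 \<le> ln (real CARD('a)) / \<eta> + \<eta> * n * C_phi D \<phi> \<pi>s \<pi>B"
    using some_seed.eta_pos some_seed.coverage_nonneg by simp
  then show ?thesis
    unfolding expected_regret_def
    by (intro prob_space.integral_le_nonneg_const[OF U] linprod.regret_bound linprod)
qed

lemma learning_rate_balance:
  fixes L M \<eta> :: real
  assumes \<eta>: "\<eta> = sqrt (L / M)" "0 < \<eta>" and "0 \<le> L" "0 \<le> M"
  shows "L / \<eta> = sqrt (L * M)" and "\<eta> * M = sqrt (L * M)"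
proof -
  have "M \<noteq> 0" using \<eta> by auto
  then have M: "0 < M" using \<open>0 \<le> M\<close> by simp
  have "\<eta>\<^sup>2 = L / M" unfolding \<eta>(1) using \<open>0 \<le> L\<close> M by simp
  then have L: "L = \<eta>\<^sup>2 * M" using M by (simp add: field_simps)
  have "sqrt (L * M) = sqrt ((\<eta> * M)\<^sup>2)" unfolding L by (simp add: power2_eq_square mult_ac)
  also have "\<dots> = \<eta> * M" using \<eta>(2) M by simp
  finally show "\<eta> * M = sqrt (L * M)" ..
  then show "L / \<eta> = sqrt (L * M)" unfolding L using \<eta>(2) by (simp add: power2_eq_square)
qed

lemma rate_tradeoff_sqrt_L_div_N:
  fixes L N C \<eta> :: real
  assumes "\<eta> = sqrt (L / N)" "0 < \<eta>" "0 \<le> L" "0 \<le> N"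
  shows "L / \<eta> + \<eta> * N * C = sqrt (N * L) * (1 + C)"
proof -
  have "L / \<eta> = sqrt (L * N)" "\<eta> * N = sqrt (L * N)"
    using learning_rate_balance[OF assms] by auto
  then show ?thesis by (simp add: algebra_simps)
qed

lemma rate_tradeoff_sqrt_L_div_CN:
  fixes L N C \<eta> :: real
  assumes "\<eta> = sqrt (L / (C * N))" "0 < \<eta>" "0 \<le> L" "0 \<le> N" "0 \<le> C"
  shows "L / \<eta> + \<eta> * N * C = 2 * sqrt (C * N * L)"
proof -
  have "L / \<eta> = sqrt (L * (C * N))" "\<eta> * (C * N) = sqrt (L * (C * N))"
    using learning_rate_balance[of \<eta> L "C * N"] assms by auto
  moreover have "\<eta> * N * C = \<eta> * (C * N)" "sqrt (L * (C * N)) = sqrt (C * N * L)"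
    by (simp_all add: mult_ac)
  ultimately show ?thesis by linarith
qed

theorem theorem3:
  fixes D :: "'x measure"
    and U :: "'u measure"
    and \<phi> :: "'x \<Rightarrow> 'a::finite \<Rightarrow> real^'d"
    and \<pi>B \<pi>s :: "'x \<Rightarrow> 'a \<Rightarrow> real"
    and adv :: "'u \<Rightarrow> nat \<Rightarrow> (nat \<Rightarrow> 'x \<times> 'a \<times> 'a) \<Rightarrow> real^'d"
    and n :: nat
  assumes D: "prob_space D"
    and U: "prob_space U"
    and phi_meas: "\<And>a. (\<lambda>x. \<phi> x a) \<in> borel_measurable D"
    and phi_bdd: "\<exists>B. \<forall>x a. norm (\<phi> x a) \<le> B"
    and piB: "is_policy \<pi>B" "\<And>a. (\<lambda>x. \<pi>B x a) \<in> borel_measurable D"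
    and pis: "is_policy \<pi>s" "\<And>a. (\<lambda>x. \<pi>s x a) \<in> borel_measurable D"
    and adv_meas: "\<And>t. (\<lambda>(u, h). adv u t h) \<in> borel_measurable
           (U \<Otimes>\<^sub>M PiM {..<t} (\<lambda>_. D \<Otimes>\<^sub>M (count_space UNIV \<Otimes>\<^sub>M count_space UNIV)))"
    and rewards: "\<And>u t h x a. 0 \<le> adv u t h \<bullet> \<phi> x a \<and> adv u t h \<bullet> \<phi> x a \<le> 1"
    and inv: "invertible (Vbar D \<phi> \<pi>B)"
  shows "(\<forall>\<eta>>0. eta_condition D \<phi> \<pi>B \<eta> \<longrightarrow>
            expected_regret U D \<phi> \<pi>B \<pi>s adv \<eta> n
              \<le> ln (real CARD('a)) / \<eta> + \<eta> * real n * C_phi D \<phi> \<pi>s \<pi>B)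
       \<and> (\<forall>\<eta>. \<eta> = sqrt (ln (real CARD('a)) / real n) \<and> \<eta> > 0 \<and> eta_condition D \<phi> \<pi>B \<eta> \<longrightarrow>
            expected_regret U D \<phi> \<pi>B \<pi>s adv \<eta> n
              \<le> sqrt (real n * ln (real CARD('a))) * (1 + C_phi D \<phi> \<pi>s \<pi>B))
       \<and> (\<forall>\<eta>. \<eta> = sqrt (ln (real CARD('a)) / (C_phi D \<phi> \<pi>s \<pi>B * real n)) \<and> \<eta> > 0
               \<and> eta_condition D \<phi> \<pi>B \<eta> \<longrightarrow>
            expected_regret U D \<phi> \<pi>B \<pi>s adv \<eta> n
              \<le> 2 * sqrt (C_phi D \<phi> \<pi>s \<pi>B * real n * ln (real CARD('a))))"
proof -
  have linprod: "linprod D \<phi> \<pi>B \<pi>s (adv u) \<eta>" if "0 < \<eta>" "eta_condition D \<phi> \<pi>B \<eta>" for u \<eta>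
    using D phi_meas phi_bdd piB pis rewards inv that
    by (simp add: linprod_def linprod_axioms_def linear_features_def linear_features_axioms_def)
  have bound: "expected_regret U D \<phi> \<pi>B \<pi>s adv \<eta> n
      \<le> ln (real CARD('a)) / \<eta> + \<eta> * n * C_phi D \<phi> \<pi>s \<pi>B"
    if "0 < \<eta>" "eta_condition D \<phi> \<pi>B \<eta>" for \<eta>
    using that by (intro expected_regret_le U linprod)
  show ?thesis
  proof (intro conjI allI impI)
    fix \<eta> assume \<eta>: "\<eta> = sqrt (ln (real CARD('a)) / n) \<and> 0 < \<eta> \<and> eta_condition D \<phi> \<pi>B \<eta>"
    with bound[of \<eta>] rate_tradeoff_sqrt_L_div_N[of \<eta> "ln (real CARD('a))" n]
    show "expected_regret U D \<phi> \<pi>B \<pi>s adv \<eta> n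
      \<le> sqrt (n * ln (real CARD('a))) * (1 + C_phi D \<phi> \<pi>s \<pi>B)"
      by auto
  next
    fix \<eta> assume \<eta>: "\<eta> = sqrt (ln (real CARD('a)) / (C_phi D \<phi> \<pi>s \<pi>B * n)) \<and> 0 < \<eta>
      \<and> eta_condition D \<phi> \<pi>B \<eta>"
    moreover from \<eta> have "0 \<le> C_phi D \<phi> \<pi>s \<pi>B"
      by (intro linprod.coverage_nonneg[OF linprod]) auto
    ultimately show "expected_regret U D \<phi> \<pi>B \<pi>s adv \<eta> n
      \<le> 2 * sqrt (C_phi D \<phi> \<pi>s \<pi>B * n * ln (real CARD('a)))"
      using bound[of \<eta>] rate_tradeoff_sqrt_L_div_CN[of \<eta> "ln (real CARD('a))" "C_phi D \<phi> \<pi>s \<pi>B" n]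
      by auto
  qed (rule bound)
qed

end
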